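(* Let $p>3$ be a prime. Then for each $k=1,2,\ldots,(p-1)/2$, $$\sum_{j=2}^{p-2k}\frac{\binom{k+j-1}{k}}{k+j}\equiv(-1)^k\left(\frac32\sum_{j=1}^k\frac{\binom{2j}{j}}{j}-\frac{\binom{2k}{k}}{k}\right)-\frac{1}{k+1}\pmod p.$$
   Context: Congruences between rational numbers are understood in the ring of rationals whose denominators are coprime to $p$. *)

theory Defs
  imports Complex_Main "HOL-Computational_Algebra.Primes"
begin

definition rat_cong :: "rat \<Rightarrow> rat \<Rightarrow> int \<Rightarrow> bool" where
  "rat_cong x y p \<longleftrightarrow>
     (\<exists>a b::int. b \<noteq> 0 \<and> coprime b p \<and> p dvd a \<and> x - y = of_int a / of_int b)"

end

theory Submission
  imports Defs "HOL-Number_Theory.Cong"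
begin

text \<open>Let F(N) be the sum of C(m-1,k)/m over 1 \<le> m \<le> N; the left-hand side is
  F(p-k) - 1/(k+1). Writing C(m-1,k) as the alternating sum of the C(m,i), i \<le> k, and
  using that C(m,i)/m sums to C(N,i)/i, one gets
  F(N) = (-1)^k H(N) + \<Sum>i=1..k. (-1)^(k-i) C(N,i)/i with H the harmonic numbers.
  Modulo p, pairing m with p - m gives H(p-k) \<equiv> H(k-1), and
  i! C(p-k,i) = (p-k)(p-k-1)...(p-k-i+1) \<equiv> (-k)(-k-1)...(-k-i+1) = (-1)^i i! C(k+i-1,i).
  Hence F(p-k) \<equiv> (-1)^k (H(k-1) + \<Sum>i=1..k. C(k+i-1,i)/i), and the bracket equals
  3/2 \<Sum>j=1..k. C(2j,j)/j - C(2k,k)/k exactly, by induction on k.\<close>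

definition p_integral :: "int \<Rightarrow> rat \<Rightarrow> bool" where
  "p_integral p x \<longleftrightarrow> (\<exists>a b::int. b \<noteq> 0 \<and> coprime b p \<and> x = of_int a / of_int b)"

lemma p_integral_of_int: "p_integral p (of_int a)"
  unfolding p_integral_def by (rule exI[of _ a], rule exI[of _ 1]) simp

lemma p_integral_0: "p_integral p 0"
  using p_integral_of_int[of p 0] by simp

lemma p_integral_inverse: "b \<noteq> 0 \<Longrightarrow> coprime b p \<Longrightarrow> p_integral p (1 / of_int b)"
  unfolding p_integral_def by (rule exI[of _ 1], rule exI[of _ b]) simp

lemma p_integral_inverse_of_nat:
  assumes "prime p" "\<not> p dvd m"
  shows "p_integral (int p) (1 / of_nat m)"
proof -
  have "m \<noteq> 0" using assms(2) by (metis dvd_0_right)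
  moreover have "coprime (int m) (int p)"
    using assms prime_imp_coprime[of p m] by (simp add: coprime_commute)
  ultimately show ?thesis using p_integral_inverse[of "int m" "int p"] by simp
qed

lemma p_integral_add: "p_integral p x \<Longrightarrow> p_integral p y \<Longrightarrow> p_integral p (x + y)"
  unfolding p_integral_def
proof (elim exE conjE)
  fix a b c d :: int
  assume "b \<noteq> 0" "coprime b p" "x = of_int a / of_int b" "d \<noteq> 0" "coprime d p" "y = of_int c / of_int d"
  then show "\<exists>a b. b \<noteq> 0 \<and> coprime b p \<and> x + y = of_int a / of_int b"
    by (intro exI[of _ "a * d + c * b"] exI[of _ "b * d"]) (auto simp: field_simps)
qed

lemma p_integral_mult: "p_integral p x \<Longrightarrow> p_integral p y \<Longrightarrow> p_integral p (x * y)"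
  unfolding p_integral_def
proof (elim exE conjE)
  fix a b c d :: int
  assume "b \<noteq> 0" "coprime b p" "x = of_int a / of_int b" "d \<noteq> 0" "coprime d p" "y = of_int c / of_int d"
  then show "\<exists>a b. b \<noteq> 0 \<and> coprime b p \<and> x * y = of_int a / of_int b"
    by (intro exI[of _ "a * c"] exI[of _ "b * d"]) auto
qed

lemma p_integral_sum: "(\<And>i. i \<in> A \<Longrightarrow> p_integral p (f i)) \<Longrightarrow> p_integral p (sum f A)"
  by (induction A rule: infinite_finite_induct)
     (auto intro: p_integral_add simp: p_integral_0)

lemma rat_cong_iff: "rat_cong x y p \<longleftrightarrow> (\<exists>z. p_integral p z \<and> x - y = of_int p * z)"
proof
  assume "rat_cong x y p"
  then obtain a b :: int where "b \<noteq> 0" "coprime b p" "p dvd a" "x - y = of_int a / of_int b"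
    unfolding rat_cong_def by blast
  then show "\<exists>z. p_integral p z \<and> x - y = of_int p * z"
    by (intro exI[of _ "of_int (a div p) / of_int b"]) (auto simp: p_integral_def)
next
  assume "\<exists>z. p_integral p z \<and> x - y = of_int p * z"
  then obtain z a b where "b \<noteq> 0" "coprime b p" "z = of_int a / of_int b" "x - y = of_int p * z"
    unfolding p_integral_def by blast
  then show "rat_cong x y p"
    unfolding rat_cong_def by (intro exI[of _ "p * a"] exI[of _ b]) auto
qed

lemma rat_cong_refl: "rat_cong x x p"
  unfolding rat_cong_iff by (rule exI[of _ 0]) (simp add: p_integral_0)

lemma rat_cong_add: "rat_cong x y p \<Longrightarrow> rat_cong u v p \<Longrightarrow> rat_cong (x + u) (y + v) p"
  unfolding rat_cong_iff
proof (elim exE conjE)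
  fix z w assume "p_integral p z" "x - y = of_int p * z" "p_integral p w" "u - v = of_int p * w"
  then show "\<exists>z. p_integral p z \<and> x + u - (y + v) = of_int p * z"
    by (intro exI[of _ "z + w"]) (auto intro: p_integral_add simp: algebra_simps)
qed

lemma rat_cong_mult_left: "p_integral p c \<Longrightarrow> rat_cong x y p \<Longrightarrow> rat_cong (c * x) (c * y) p"
  unfolding rat_cong_iff
proof (elim exE conjE)
  fix z assume "p_integral p c" "p_integral p z" "x - y = of_int p * z"
  then show "\<exists>w. p_integral p w \<and> c * x - c * y = of_int p * w"
    by (intro exI[of _ "c * z"]) (auto intro: p_integral_mult simp: algebra_simps)
qed

lemma rat_cong_sum: "(\<And>i. i \<in> A \<Longrightarrow> rat_cong (f i) (g i) p) \<Longrightarrow> rat_cong (sum f A) (sum g A) p"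
  by (induction A rule: infinite_finite_induct) (auto intro: rat_cong_add simp: rat_cong_refl)

lemma rat_cong_of_int: "[a = b] (mod p) \<Longrightarrow> rat_cong (of_int a) (of_int b) p"
  unfolding rat_cong_def cong_iff_dvd_diff by (intro exI[of _ "a - b"] exI[of _ 1]) auto

lemma choose_pred_alternating_sum:
  assumes "1 \<le> m"
  shows "of_nat ((m - 1) choose k) = (\<Sum>i\<le>k. (-1) ^ (k - i) * of_nat (m choose i) :: 'a::comm_ring_1)"
proof (induction k)
  case 0
  then show ?case by simp
next
  case (Suc k)
  have pascal: "of_nat (m choose Suc k) = (of_nat ((m - 1) choose k) + of_nat ((m - 1) choose Suc k) :: 'a)"
    using assms by (cases m) auto
  have "(\<Sum>i\<le>k. (-1) ^ (Suc k - i) * of_nat (m choose i)) = - (\<Sum>i\<le>k. (-1) ^ (k - i) * of_nat (m choose i) :: 'a)"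
    unfolding sum_negf[symmetric] by (intro sum.cong) (auto simp: Suc_diff_le)
  then show ?case using pascal Suc.IH by (simp add: sum.atMost_Suc)
qed

lemma sum_choose_div:
  assumes "1 \<le> i"
  shows "(\<Sum>m=1..N. of_nat (m choose i) / of_nat m) = (of_nat (N choose i) / of_nat i :: 'a::field_char_0)"
proof (induction N)
  case 0
  then show ?case using assms by simp
next
  case (Suc N)
  obtain a where a: "i = Suc a" using assms by (cases i) auto
  have "of_nat (Suc N) * of_nat (N choose a) = (of_nat (Suc N choose i) * of_nat i :: 'a)"
    unfolding a of_nat_mult[symmetric] Suc_times_binomial_eq ..
  moreover have "(of_nat (Suc N) :: 'a) \<noteq> 0" "(of_nat i :: 'a) \<noteq> 0"
    using a of_nat_eq_0_iff by blast+
  ultimately have "of_nat (Suc N choose i) / of_nat (Suc N) = (of_nat (N choose a) / of_nat i :: 'a)"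
    by (simp add: frac_eq_eq mult.commute)
  then show ?case using Suc.IH a by (simp add: add_divide_distrib)
qed

definition harmonic :: "nat \<Rightarrow> 'a::field_char_0" where
  "harmonic n = (\<Sum>m=1..n. 1 / of_nat m)"

lemma sum_choose_pred_div:
  "(\<Sum>m=1..N. of_nat ((m - 1) choose k) / of_nat m) =
     (-1) ^ k * harmonic N + (\<Sum>i=1..k. (-1) ^ (k - i) * of_nat (N choose i) / of_nat i :: 'a::field_char_0)"
proof -
  have "(\<Sum>m=1..N. of_nat ((m - 1) choose k) / of_nat m) =
        (\<Sum>m=1..N. \<Sum>i\<le>k. (-1) ^ (k - i) * (of_nat (m choose i) / of_nat m) :: 'a)"
  proof (intro sum.cong refl)
    fix m assume "m \<in> {1..N}"
    then have "1 \<le> m" by simp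
    show "of_nat ((m - 1) choose k) / of_nat m =
               (\<Sum>i\<le>k. (-1) ^ (k - i) * (of_nat (m choose i) / of_nat m) :: 'a)"
      by (simp only: choose_pred_alternating_sum[OF \<open>1 \<le> m\<close>] sum_divide_distrib times_divide_eq_right)
  qed
  also have "\<dots> = (\<Sum>i\<le>k. (-1) ^ (k - i) * (\<Sum>m=1..N. of_nat (m choose i) / of_nat m))"
    unfolding sum_distrib_left by (rule sum.swap)
  also have "\<dots> = (-1) ^ k * harmonic N + (\<Sum>i=1..k. (-1) ^ (k - i) * (\<Sum>m=1..N. of_nat (m choose i) / of_nat m))"
    by (simp add: atMost_atLeast0 sum.atLeast_Suc_atMost harmonic_def)
  also have "\<dots> = (-1) ^ k * harmonic N + (\<Sum>i=1..k. (-1) ^ (k - i) * of_nat (N choose i) / of_nat i)"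
  proof (intro arg_cong2[where f = "(+)"] refl sum.cong)
    fix i assume "i \<in> {1..k}"
    then have "1 \<le> i" by simp
    show "(-1) ^ (k - i) * (\<Sum>m=1..N. of_nat (m choose i) / of_nat m) =
          (-1) ^ (k - i) * of_nat (N choose i) / (of_nat i :: 'a)"
      by (simp only: sum_choose_div[OF \<open>1 \<le> i\<close>] times_divide_eq_right)
  qed
  finally show ?thesis .
qed

lemma sum_choose_pred_div_split:
  assumes "1 \<le> n"
  shows "(\<Sum>m=1..n + k. of_nat ((m - 1) choose k) / of_nat m) =
           1 / of_nat (k + 1) + (\<Sum>j=2..n. of_nat ((k + j - 1) choose k) / of_nat (k + j) :: 'a::field_char_0)"
proof -
  have "{1..n + k} = {1..k} \<union> {k + 1} \<union> {k + 2..n + k}" using assms by auto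
  then have "(\<Sum>m=1..n + k. of_nat ((m - 1) choose k) / of_nat m) =
      (\<Sum>m=1..k. of_nat ((m - 1) choose k) / of_nat m) + 1 / of_nat (k + 1)
      + (\<Sum>m=k + 2..n + k. of_nat ((m - 1) choose k) / (of_nat m :: 'a))"
    by (simp add: sum.union_disjoint)
  also have "(\<Sum>m=1..k. of_nat ((m - 1) choose k) / (of_nat m :: 'a)) = 0"
    by (intro sum.neutral) auto
  also have "(\<Sum>m=k + 2..n + k. of_nat ((m - 1) choose k) / (of_nat m :: 'a)) =
             (\<Sum>j=2..n. of_nat ((k + j - 1) choose k) / of_nat (k + j))"
    by (rule sum.reindex_bij_witness[of _ "\<lambda>j. k + j" "\<lambda>m. m - k"]) auto
  finally show ?thesis by simp
qed

definition multichoose_sum :: "nat \<Rightarrow> 'a::field_char_0" where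
  "multichoose_sum k = (\<Sum>i=1..k. of_nat ((k + i - 1) choose i) / of_nat i)"

lemma choose_pred_div_eq:
  assumes "1 \<le> k" "1 \<le> i"
  shows "of_nat ((k + i - 1) choose (i - 1)) / of_nat i = (of_nat ((k + i - 1) choose i) / of_nat k :: 'a::field_char_0)"
proof -
  obtain b where b: "i = Suc b" using assms(2) by (cases i) auto
  have "k * ((k + b) choose b) = i * ((k + b) choose i)"
    using binomial_absorb_comp[of "k + b" b] binomial_absorption[of b "k + b"] b by simp
  then have "of_nat k * of_nat ((k + i - 1) choose (i - 1)) = (of_nat i * of_nat ((k + i - 1) choose i) :: 'a)"
    using b by (metis add_Suc_right diff_Suc_1 of_nat_mult)
  moreover have "(of_nat k :: 'a) \<noteq> 0" "(of_nat i :: 'a) \<noteq> 0" using assms by auto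
  ultimately show ?thesis by (simp add: frac_eq_eq mult.commute)
qed

lemma sum_choose_pred_div_Suc:
  assumes "1 \<le> k"
  shows "(\<Sum>i=1..Suc k. of_nat ((k + i - 1) choose (i - 1)) / of_nat i) =
           (of_nat ((2 * k + 1) choose (k + 1)) - 1) / (of_nat k :: 'a::field_char_0)"
proof -
  have "(\<Sum>i=1..Suc k. of_nat ((k + i - 1) choose (i - 1)) / of_nat i) =
        (\<Sum>i=1..Suc k. of_nat ((k - 1 + i) choose i)) / (of_nat k :: 'a)"
    unfolding sum_divide_distrib
  proof (intro sum.cong refl)
    fix i assume "i \<in> {1..Suc k}"
    then have "1 \<le> i" by simp
    show "of_nat ((k + i - 1) choose (i - 1)) / of_nat i = of_nat ((k - 1 + i) choose i) / (of_nat k :: 'a)"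
      using choose_pred_div_eq[OF assms \<open>1 \<le> i\<close>] assms by (simp add: add.commute)
  qed
  also have "(\<Sum>i=1..Suc k. of_nat ((k - 1 + i) choose i)) = (\<Sum>i\<le>Suc k. of_nat ((k - 1 + i) choose i)) - (1 :: 'a)"
    by (simp add: sum.atMost_Suc_shift atLeast0AtMost[symmetric] sum.atLeast_Suc_atMost)
  also have "(\<Sum>i\<le>Suc k. of_nat ((k - 1 + i) choose i)) = (of_nat (Suc (k - 1 + Suc k) choose Suc k) :: 'a)"
    unfolding of_nat_sum[symmetric] sum_choose_lower ..
  also have "Suc (k - 1 + Suc k) = 2 * k + 1" using assms by simp
  finally show ?thesis by simp
qed

lemma multichoose_sum_Suc:
  assumes "1 \<le> k"
  shows "multichoose_sum (Suc k) = multichoose_sum k + of_nat ((2 * k + 1) choose (k + 1)) / of_nat (k + 1)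
           + (of_nat ((2 * k) choose k) - 1) / (of_nat k :: 'a::field_char_0)"
proof -
  have "multichoose_sum (Suc k) =
          (\<Sum>i=1..Suc k. of_nat ((k + i - 1) choose i) / of_nat i)
          + (\<Sum>i=1..Suc k. of_nat ((k + i - 1) choose (i - 1)) / (of_nat i :: 'a))"
    unfolding multichoose_sum_def sum.distrib[symmetric]
  proof (intro sum.cong refl)
    fix i assume "i \<in> {1..Suc k}"
    then obtain b where "i = Suc b" by (cases i) auto
    then show "of_nat ((Suc k + i - 1) choose i) / of_nat i =
        of_nat ((k + i - 1) choose i) / of_nat i + of_nat ((k + i - 1) choose (i - 1)) / (of_nat i :: 'a)"
      by (simp add: add_divide_distrib)
  qed
  also have "(\<Sum>i=1..Suc k. of_nat ((k + i - 1) choose i) / of_nat i) =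
             multichoose_sum k + of_nat ((2 * k) choose (k + 1)) / (of_nat (k + 1) :: 'a)"
    unfolding multichoose_sum_def by (simp add: mult_2)
  finally have "multichoose_sum (Suc k) = multichoose_sum k + of_nat ((2 * k) choose (k + 1)) / of_nat (k + 1)
      + (of_nat ((2 * k + 1) choose (k + 1)) - 1) / (of_nat k :: 'a)"
    using sum_choose_pred_div_Suc[OF assms] by simp
  moreover have "of_nat ((2 * k) choose (k + 1)) / of_nat k = (of_nat ((2 * k) choose k) / of_nat (k + 1) :: 'a)"
    using choose_pred_div_eq[of k "k + 1"] assms by (simp add: mult_2 eq_commute)
  moreover have "of_nat ((2 * k + 1) choose (k + 1)) = (of_nat ((2 * k) choose k) + of_nat ((2 * k) choose (k + 1)) :: 'a)"
    by simp
  ultimately show ?thesis by (simp only: add_divide_distrib diff_divide_distrib) simp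
qed

lemma central_binomial_Suc: "(2 * Suc k) choose Suc k = 2 * ((2 * k + 1) choose (k + 1))"
proof -
  have "(2 * k + 1) choose k = (2 * k + 1) choose (k + 1)"
    using binomial_symmetric[of k "2 * k + 1"] by simp
  then show ?thesis by (simp add: numeral_eq_Suc)
qed

lemma harmonic_add_multichoose_sum:
  assumes "1 \<le> k"
  shows "harmonic (k - 1) + multichoose_sum k =
           3 / 2 * (\<Sum>j=1..k. of_nat ((2 * j) choose j) / of_nat j)
           - of_nat ((2 * k) choose k) / (of_nat k :: 'a::field_char_0)"
  using assms
proof (induction k rule: nat_induct_at_least)
  case base
  then show ?case by (simp add: harmonic_def multichoose_sum_def)
next
  case (Suc k)
  define S where "S = (\<Sum>j=1..k. of_nat ((2 * j) choose j) / (of_nat j :: 'a))"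
  define c where "c = (of_nat ((2 * k) choose k) :: 'a)"
  define e where "e = (of_nat ((2 * k + 1) choose (k + 1)) :: 'a)"
  have "harmonic (Suc k - 1) = harmonic (k - 1) + 1 / (of_nat k :: 'a)"
    using Suc.hyps by (cases k) (simp_all add: harmonic_def)
  then have "harmonic (Suc k - 1) + multichoose_sum (Suc k) =
             (harmonic (k - 1) + multichoose_sum k) + 1 / of_nat k + e / of_nat (k + 1) + (c - 1) / (of_nat k :: 'a)"
    unfolding multichoose_sum_Suc[OF Suc.hyps] c_def e_def by simp
  also have "\<dots> = 3 / 2 * S + e / of_nat (k + 1)"
    unfolding Suc.IH S_def[symmetric] c_def[symmetric] by (simp add: diff_divide_distrib)
  also have "\<dots> = 3 / 2 * (S + 2 * e / of_nat (Suc k)) - 2 * e / of_nat (Suc k)"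
    by (simp add: algebra_simps)
  also have "2 * e = of_nat ((2 * Suc k) choose Suc k)"
    unfolding e_def central_binomial_Suc by simp
  finally show ?case by (simp add: S_def)
qed

lemma harmonic_reflect_cong:
  assumes p: "prime p" and k: "1 \<le> k" "2 * k < p"
  shows "rat_cong (harmonic (p - k)) (harmonic (k - 1)) (int p)"
proof -
  define X where "X = (\<Sum>m=k..p - k. 1 / of_nat m :: rat)"
  define Y where "Y = (\<Sum>m=k..p - k. 1 / of_nat m * (1 / of_nat (p - m)) :: rat)"
  have "{1..p - k} = {1..k - 1} \<union> {k..p - k}" using k by auto
  then have split: "harmonic (p - k) = harmonic (k - 1) + X"
    unfolding harmonic_def X_def by (simp add: sum.union_disjoint[symmetric])
  have reflect: "X = (\<Sum>m=k..p - k. 1 / of_nat (p - m))"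
    unfolding X_def by (rule sum.reindex_bij_witness[of _ "\<lambda>m. p - m" "\<lambda>m. p - m"]) (use k in auto)
  have "2 * X = (\<Sum>m=k..p - k. 1 / of_nat m + 1 / of_nat (p - m))"
    by (metis X_def reflect mult_2 sum.distrib)
  also have "\<dots> = of_int (int p) * Y"
    unfolding Y_def sum_distrib_left
  proof (intro sum.cong refl)
    fix m assume "m \<in> {k..p - k}"
    then have "0 < m" "m < p" using k by auto
    then show "1 / of_nat m + 1 / of_nat (p - m) = of_int (int p) * (1 / of_nat m * (1 / (of_nat (p - m) :: rat)))"
      by (simp add: field_simps of_nat_diff)
  qed
  finally have X: "X = of_int (int p) * (1 / of_nat 2 * Y)" by simp
  have "p_integral (int p) Y"
    unfolding Y_def
  proof (intro p_integral_sum p_integral_mult p_integral_inverse_of_nat[OF p])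
    fix m assume "m \<in> {k..p - k}"
    then have "0 < m" "m < p" using k by auto
    then show "\<not> p dvd m" "\<not> p dvd (p - m)" by (auto dest: dvd_imp_le)
  qed
  moreover have "\<not> p dvd 2" using k by (auto dest: dvd_imp_le)
  ultimately have "p_integral (int p) (1 / of_nat 2 * Y)"
    by (intro p_integral_mult p_integral_inverse_of_nat[OF p])
  then show ?thesis unfolding rat_cong_iff split X by auto
qed

lemma choose_reflect_cong:
  assumes p: "prime p" and "i < p" "1 \<le> k" "k \<le> p"
  shows "rat_cong (of_nat ((p - k) choose i)) ((-1) ^ i * of_nat ((k + i - 1) choose i)) (int p)"
proof -
  define P where "P = (\<Prod>t=0..<i. int (p - k) - int t)"
  define Q where "Q = (\<Prod>t=0..<i. - int k - int t)"
  have P: "fact i * (of_nat ((p - k) choose i) :: rat) = of_int P"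
    unfolding binomial_gbinomial gbinomial_mult_fact P_def of_int_prod by simp
  have "of_nat (k + i - 1) = (of_nat k + of_nat i - 1 :: rat)" using assms by (simp add: of_nat_diff)
  then have "(-1) ^ i * of_nat ((k + i - 1) choose i) = (-1) ^ i * ((of_nat k + of_nat i - 1) gchoose i :: rat)"
    by (simp only: binomial_gbinomial)
  also have "\<dots> = (- of_nat k) gchoose i"
    by (rule gbinomial_minus[symmetric])
  finally have Q: "fact i * ((-1) ^ i * of_nat ((k + i - 1) choose i) :: rat) = of_int Q"
    by (simp add: gbinomial_mult_fact Q_def of_int_prod)
  have "\<not> p dvd fact i" using prime_dvd_fact_iff[OF p] assms by simp
  then have "p_integral (int p) (1 / fact i)"
    using p_integral_inverse_of_nat[OF p] by (metis of_nat_fact)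
  moreover have "[P = Q] (mod int p)"
    unfolding P_def Q_def
    by (rule cong_prod) (use assms in \<open>auto simp: cong_iff_dvd_diff of_nat_diff\<close>)
  ultimately have "rat_cong (1 / fact i * of_int P) (1 / fact i * of_int Q) (int p)"
    by (intro rat_cong_mult_left rat_cong_of_int)
  then show ?thesis unfolding P[symmetric] Q[symmetric] by simp
qed

lemma sum_choose_pred_div_cong:
  assumes p: "prime p" and k: "1 \<le> k" "2 * k < p"
  shows "rat_cong (\<Sum>m=1..p - k. of_nat ((m - 1) choose k) / of_nat m)
           ((-1) ^ k * (harmonic (k - 1) + multichoose_sum k)) (int p)"
proof -
  have sign: "p_integral (int p) ((-1) ^ n)" for n
    using p_integral_of_int[of "int p" "(-1) ^ n"] by simp
  have "(\<Sum>m=1..p - k. of_nat ((m - 1) choose k) / of_nat m) =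
        (-1) ^ k * harmonic (p - k) + (\<Sum>i=1..k. (-1) ^ (k - i) / of_nat i * of_nat ((p - k) choose i) :: rat)"
    unfolding sum_choose_pred_div by simp
  moreover have "(-1) ^ k * (harmonic (k - 1) + multichoose_sum k) =
        (-1) ^ k * harmonic (k - 1)
        + (\<Sum>i=1..k. (-1) ^ (k - i) / of_nat i * ((-1) ^ i * of_nat ((k + i - 1) choose i)) :: rat)"
    unfolding multichoose_sum_def distrib_left sum_distrib_left
  proof (intro arg_cong2[where f = "(+)"] refl sum.cong)
    fix i assume "i \<in> {1..k}"
    then have "(-1) ^ (k - i) * (-1) ^ i = ((-1) ^ k :: rat)" by (simp flip: power_add)
    then show "(-1) ^ k * (of_nat ((k + i - 1) choose i) / of_nat i) =
               (-1) ^ (k - i) / of_nat i * ((-1) ^ i * of_nat ((k + i - 1) choose i) :: rat)"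
      by (simp add: field_simps)
  qed
  moreover have "rat_cong ((-1) ^ (k - i) / of_nat i * of_nat ((p - k) choose i))
        ((-1) ^ (k - i) / of_nat i * ((-1) ^ i * of_nat ((k + i - 1) choose i))) (int p)"
    if "i \<in> {1..k}" for i
  proof -
    have "\<not> p dvd i" using that k by (auto dest: dvd_imp_le)
    then have "p_integral (int p) ((-1) ^ (k - i) * (1 / of_nat i))"
      by (intro p_integral_mult sign p_integral_inverse_of_nat[OF p])
    from rat_cong_mult_left[OF this choose_reflect_cong[OF p, of i k]] that k
    show ?thesis by (simp add: mult.assoc)
  qed
  ultimately show ?thesis
    by (simp only:) (intro rat_cong_add rat_cong_mult_left[OF sign] harmonic_reflect_cong[OF p k] rat_cong_sum)
qed

theorem lemma2p3:
  fixes p k :: nat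
  assumes "prime p" and "p > 3" and "1 \<le> k" and "k \<le> (p - 1) div 2"
  shows "rat_cong
           (\<Sum>j = 2..p - 2 * k. of_nat ((k + j - 1) choose k) / of_nat (k + j))
           ((-1) ^ k * (3 / 2 * (\<Sum>j = 1..k. of_nat ((2 * j) choose j) / of_nat j)
                         - of_nat ((2 * k) choose k) / of_nat k)
            - 1 / of_nat (k + 1))
           (int p)"
proof -
  have k: "2 * k < p" using assms(2,4) by linarith
  then have "(\<Sum>j = 2..p - 2 * k. of_nat ((k + j - 1) choose k) / of_nat (k + j)) =
             (\<Sum>m=1..p - k. of_nat ((m - 1) choose k) / of_nat m) - 1 / (of_nat (k + 1) :: rat)"
    using sum_choose_pred_div_split[of "p - 2 * k" k, where 'a = rat] by simp
  moreover have "rat_cong (\<Sum>m=1..p - k. of_nat ((m - 1) choose k) / of_nat m)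
      ((-1) ^ k * (3 / 2 * (\<Sum>j = 1..k. of_nat ((2 * j) choose j) / of_nat j)
                   - of_nat ((2 * k) choose k) / of_nat k)) (int p)"
    using sum_choose_pred_div_cong[OF assms(1,3) k] harmonic_add_multichoose_sum[OF assms(3), where 'a = rat] by simp
  ultimately show ?thesis
    using rat_cong_add[OF _ rat_cong_refl[of "- 1 / of_nat (k + 1)"]] by simp
qed

end
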